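(* Let $M$ be an involutive monoid. The tuple category $T(M)$ has the structure of a $\mathcal{D}_{\mathbf{Cat}}$-algebra; that is, it is an $E_\infty$-algebra in $\mathbf{Cat}$.
   Context: An involutive monoid is a monoid $M$ with a map $m\mapsto\overline m$ with $\overline{\overline m}=m$, $\overline{mn}=\overline n\,\overline m$, $\overline 1=1$. Let $C_2=\{1,t\}$. The category $\Delta H_+$: objects $[n]=\{0,\dots,n\}$ for $n\ge -1$ (with $[-1]=\emptyset$); a morphism $f:[n]\to[m]$ is a map of sets with a total order on each fibre $f^{-1}(i)$ and a $C_2$-label on each element of $[n]$; the composite $g\circ f$ has fibre over $i$ equal to the concatenation, in the order of $g^{-1}(i)$, of the fibres $f^{-1}(j)$, each replaced by $f^{-1}(j)^t$ (order reversed, labels multiplied by $t$) when $j$ has label $t$ in $g$. For $f:[p-1]\to[q-1]$ and $\mathbf m=(m_0,\dots,m_{p-1})\in M^p$, let $\mathsf{H}_M(f)(\mathbf m)=(b_0,\dots,b_{q-1})$ with $b_i$ the product, in the order of $f^{-1}(i)$, of $m_x$ (label $1$) or $\overline{m_x}$ (label $t$), empty product $1$. The tuple category $T(M)$ has as objects all finite (possibly empty) tuples of elements of $M$; for each $f\in\mathrm{Hom}_{\Delta H_+}([p-1],[q-1])$, $p,q\ge0$, and $\mathbf m\in M^p$ there is a morphism $(f,\mathbf m):\mathbf m\to\mathsf H_M(f)(\mathbf m)$, composition being induced by composition in $\Delta H_+$. The categorical Barratt–Eccles operad $\mathcal D_{\mathbf{Cat}}$ has $\mathcal D_{\mathbf{Cat}}(m)=\mathbb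 E\Sigma_m$ (objects the elements of $\Sigma_m$, a unique morphism between any two objects), with composition on objects $(\sigma,\tau_1,\dots,\tau_m)\mapsto\tau_{\sigma^{-1}(1)}\times\cdots\times\tau_{\sigma^{-1}(m)}$ (block permutation), and $\Sigma_m$ acting by right multiplication; it is an $E_\infty$-operad in $\mathbf{Cat}$ with the Thomason model structure. *)

theory Defs
  imports "HOL-Combinatorics.Permutations"
begin

definition involution :: "('m::monoid_mult \<Rightarrow> 'm) \<Rightarrow> bool" where
  "involution bar \<longleftrightarrow> (\<forall>m. bar (bar m) = m) \<and> (\<forall>m n. bar (m * n) = bar n * bar m) \<and> bar 1 = 1"

text \<open>A morphism [p-1] -> [q-1] is encoded as a list of length q; entry i is the fibre
  over i, listed in its total order, each element paired with its C_2-label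
  (True = t, False = 1).\<close>
type_synonym dmor = "(nat \<times> bool) list list"

definition dhom :: "nat \<Rightarrow> nat \<Rightarrow> dmor set" where
  "dhom p q = {F. length F = q \<and> distinct (map fst (concat F)) \<and> set (map fst (concat F)) = {0..<p}}"

definition flipfib :: "(nat \<times> bool) list \<Rightarrow> (nat \<times> bool) list" where
  "flipfib xs = rev (map (\<lambda>(x, e). (x, \<not> e)) xs)"

definition dcomp :: "dmor \<Rightarrow> dmor \<Rightarrow> dmor" where
  "dcomp G F = map (\<lambda>fib. concat (map (\<lambda>(j, e). if e then flipfib (F ! j) else F ! j) fib)) G"

definition did :: "nat \<Rightarrow> dmor" where
  "did p = map (\<lambda>i. [(i, False)]) [0..<p]"

definition HM :: "('m::monoid_mult \<Rightarrow> 'm) \<Rightarrow> dmor \<Rightarrow> 'm list \<Rightarrow> 'm list" where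
  "HM bar F ms = map (\<lambda>fib. prod_list (map (\<lambda>(x, e). if e then bar (ms ! x) else ms ! x) fib)) F"

record ('o, 'a) cat =
  Ob :: "'o set"
  Ar :: "'a set"
  Dom :: "'a \<Rightarrow> 'o"
  Cod :: "'a \<Rightarrow> 'o"
  Id :: "'o \<Rightarrow> 'a"
  Comp :: "'a \<Rightarrow> 'a \<Rightarrow> 'a"   \<comment> \<open>Comp g f = g \<circ> f\<close>

definition category :: "('o, 'a) cat \<Rightarrow> bool" where
  "category C \<longleftrightarrow>
     (\<forall>x\<in>Ob C. Id C x \<in> Ar C \<and> Dom C (Id C x) = x \<and> Cod C (Id C x) = x) \<and>
     (\<forall>f\<in>Ar C. Dom C f \<in> Ob C \<and> Cod C f \<in> Ob C) \<and>
     (\<forall>f\<in>Ar C. \<forall>g\<in>Ar C. Cod C f = Dom C g \<longrightarrow>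
         Comp C g f \<in> Ar C \<and> Dom C (Comp C g f) = Dom C f \<and> Cod C (Comp C g f) = Cod C g) \<and>
     (\<forall>f\<in>Ar C. Comp C f (Id C (Dom C f)) = f \<and> Comp C (Id C (Cod C f)) f = f) \<and>
     (\<forall>f\<in>Ar C. \<forall>g\<in>Ar C. \<forall>h\<in>Ar C. Cod C f = Dom C g \<longrightarrow> Cod C g = Dom C h \<longrightarrow>
         Comp C h (Comp C g f) = Comp C (Comp C h g) f)"

definition tuple_cat :: "('m::monoid_mult \<Rightarrow> 'm) \<Rightarrow> ('m list, dmor \<times> 'm list) cat" where
  "tuple_cat bar =
     \<lparr> Ob = UNIV,
       Ar = {(F, ms). \<exists>q. F \<in> dhom (length ms) q},
       Dom = (\<lambda>(F, ms). ms),
       Cod = (\<lambda>(F, ms). HM bar F ms),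
       Id = (\<lambda>ms. (did (length ms), ms)),
       Comp = (\<lambda>(G, ns) (F, ms). (dcomp G F, ms)) \<rparr>"

text \<open>Objects of E Sigma_m: permutations of {0..<m}; a morphism sigma -> sigma' is the pair
  (sigma, sigma') (unique morphism).\<close>
definition perms :: "nat \<Rightarrow> (nat \<Rightarrow> nat) set" where
  "perms m = {\<sigma>. \<sigma> permutes {0..<m}}"

definition offs :: "nat list \<Rightarrow> nat \<Rightarrow> nat" where
  "offs js k = sum_list (take k js)"

text \<open>Operad composition gamma(sigma; tau_1, ..., tau_k) with arities js = [j_1,...,j_k]:
  the block permutation (tau_{sigma^-1(1)} x ... x tau_{sigma^-1(k)}) composed with the
  permutation of blocks given by sigma.  Input b of block k goes to output position
  (sum of j_{sigma^-1(i)} for i < sigma k) + tau_k(b).\<close>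
definition gamma :: "(nat \<Rightarrow> nat) \<Rightarrow> (nat \<Rightarrow> nat) list \<Rightarrow> nat list \<Rightarrow> (nat \<Rightarrow> nat)" where
  "gamma \<sigma> \<tau>s js a =
     (if a < sum_list js then
        (let k = (THE k. k < length js \<and> offs js k \<le> a \<and> a < offs js (Suc k))
         in (\<Sum>i<\<sigma> k. js ! inv \<sigma> i) + (\<tau>s ! k) (a - offs js k))
      else a)"

definition act :: "(nat \<Rightarrow> nat) \<Rightarrow> 'x list \<Rightarrow> 'x list" where
  "act \<rho> xs = map (\<lambda>i. xs ! inv \<rho> i) [0..<length xs]"

text \<open>A D_Cat-algebra structure on a category C: functors
  theta_m : E Sigma_m x C^m -> C for all m (m = length of the list), given on objects by thO
  and on morphisms by thA (thA sigma sigma' phis is the image of ((sigma,sigma'), phis)),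
  satisfying unit, equivariance and associativity on objects and on morphisms.\<close>
definition Dcat_algebra ::
  "('o, 'a) cat \<Rightarrow> ((nat \<Rightarrow> nat) \<Rightarrow> 'o list \<Rightarrow> 'o) \<Rightarrow> ((nat \<Rightarrow> nat) \<Rightarrow> (nat \<Rightarrow> nat) \<Rightarrow> 'a list \<Rightarrow> 'a) \<Rightarrow> bool" where
  "Dcat_algebra C thO thA \<longleftrightarrow>
     category C \<and>
     \<comment> \<open>functoriality of each theta_m\<close>
     (\<forall>\<sigma> xs. \<sigma> \<in> perms (length xs) \<and> set xs \<subseteq> Ob C \<longrightarrow> thO \<sigma> xs \<in> Ob C) \<and>
     (\<forall>\<sigma> \<sigma>' fs. \<sigma> \<in> perms (length fs) \<and> \<sigma>' \<in> perms (length fs) \<and> set fs \<subseteq> Ar C \<longrightarrow>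
         thA \<sigma> \<sigma>' fs \<in> Ar C \<and>
         Dom C (thA \<sigma> \<sigma>' fs) = thO \<sigma> (map (Dom C) fs) \<and>
         Cod C (thA \<sigma> \<sigma>' fs) = thO \<sigma>' (map (Cod C) fs)) \<and>
     (\<forall>\<sigma> xs. \<sigma> \<in> perms (length xs) \<and> set xs \<subseteq> Ob C \<longrightarrow>
         thA \<sigma> \<sigma> (map (Id C) xs) = Id C (thO \<sigma> xs)) \<and>
     (\<forall>\<sigma> \<sigma>' \<sigma>'' fs gs. \<sigma> \<in> perms (length fs) \<and> \<sigma>' \<in> perms (length fs) \<and> \<sigma>'' \<in> perms (length fs) \<and>
         length gs = length fs \<and> set fs \<subseteq> Ar C \<and> set gs \<subseteq> Ar C \<and> map (Dom C) gs = map (Cod C) fs \<longrightarrow>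
         Comp C (thA \<sigma>' \<sigma>'' gs) (thA \<sigma> \<sigma>' fs) = thA \<sigma> \<sigma>'' (map2 (Comp C) gs fs)) \<and>
     \<comment> \<open>unit\<close>
     (\<forall>x\<in>Ob C. thO id [x] = x) \<and>
     (\<forall>f\<in>Ar C. thA id id [f] = f) \<and>
     \<comment> \<open>equivariance (right action of Sigma_m)\<close>
     (\<forall>\<sigma> \<rho> xs. \<sigma> \<in> perms (length xs) \<and> \<rho> \<in> perms (length xs) \<and> set xs \<subseteq> Ob C \<longrightarrow>
         thO (\<sigma> \<circ> \<rho>) xs = thO \<sigma> (act \<rho> xs)) \<and>
     (\<forall>\<sigma> \<sigma>' \<rho> fs. \<sigma> \<in> perms (length fs) \<and> \<sigma>' \<in> perms (length fs) \<and> \<rho> \<in> perms (length fs) \<and>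
         set fs \<subseteq> Ar C \<longrightarrow>
         thA (\<sigma> \<circ> \<rho>) (\<sigma>' \<circ> \<rho>) fs = thA \<sigma> \<sigma>' (act \<rho> fs)) \<and>
     \<comment> \<open>associativity\<close>
     (\<forall>\<sigma> \<tau>s xss. \<sigma> \<in> perms (length xss) \<and> length \<tau>s = length xss \<and>
         (\<forall>i<length xss. \<tau>s ! i \<in> perms (length (xss ! i)) \<and> set (xss ! i) \<subseteq> Ob C) \<longrightarrow>
         thO \<sigma> (map2 thO \<tau>s xss) = thO (gamma \<sigma> \<tau>s (map length xss)) (concat xss)) \<and>
     (\<forall>\<sigma> \<sigma>' \<tau>s \<tau>s' fss. \<sigma> \<in> perms (length fss) \<and> \<sigma>' \<in> perms (length fss) \<and>
         length \<tau>s = length fss \<and> length \<tau>s' = length fss \<and>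
         (\<forall>i<length fss. \<tau>s ! i \<in> perms (length (fss ! i)) \<and> \<tau>s' ! i \<in> perms (length (fss ! i)) \<and>
              set (fss ! i) \<subseteq> Ar C) \<longrightarrow>
         thA \<sigma> \<sigma>' (map (\<lambda>i. thA (\<tau>s ! i) (\<tau>s' ! i) (fss ! i)) [0..<length fss]) =
         thA (gamma \<sigma> \<tau>s (map length fss)) (gamma \<sigma>' \<tau>s' (map length fss)) (concat fss))"

end

theory Submission
  imports Defs
begin

(* On objects, theta(sigma; x_1, ..., x_m) concatenates the tuples x_k in the order prescribed
   by sigma.  On a morphism ((sigma, sigma'); f_1, ..., f_m) it is the block sum of the f_k:
   the target is the sigma'-ordered concatenation of the targets, and the fibre over a position
   in block k is the fibre of f_k with its source indices shifted to where the k-th source starts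
   in the sigma-ordered concatenation.  As E Sigma_m is indiscrete, functoriality only asks that
   block sums commute with composition in Delta H_+ and with H_M, where the involution makes a
   reversed fibre evaluate to the conjugate of its product.  Unit and equivariance are
   reindexings; associativity holds because gamma(sigma; tau_1, ..., tau_k) reorders a
   concatenation of concatenations exactly as the two-step reordering does, and block start
   positions add up along it. *)

lemma permutes_less: "(s::nat \<Rightarrow> nat) permutes {0..<n} \<Longrightarrow> k < n \<Longrightarrow> s k < n"
  using permutes_in_image[of s "{0..<n}" k] by auto

lemma permutes_inv_less: "(s::nat \<Rightarrow> nat) permutes {0..<n} \<Longrightarrow> k < n \<Longrightarrow> inv s k < n"
  using permutes_inv permutes_less by blast

lemma length_act [simp]: "length (act s xs) = length xs"
  by (simp add: act_def)

lemma nth_act [simp]: "i < length xs \<Longrightarrow> act s xs ! i = xs ! inv s i"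
  by (simp add: act_def)

lemma nth_act_image: "s permutes {0..<length xs} \<Longrightarrow> k < length xs \<Longrightarrow> act s xs ! s k = xs ! k"
  by (simp add: permutes_less permutes_inverses)

lemma act_id [simp]: "act id xs = xs"
  by (rule nth_equalityI) auto

lemma act_map: "s permutes {0..<length xs} \<Longrightarrow> act s (map f xs) = map f (act s xs)"
  by (rule nth_equalityI) (auto simp: permutes_inv_less)

lemma act_map_upt: "s permutes {0..<n} \<Longrightarrow> act s (map f [0..<n]) = map (\<lambda>k. f (inv s k)) [0..<n]"
  by (rule nth_equalityI) (auto simp: permutes_inv_less)

lemma act_comp:
  "s permutes {0..<length xs} \<Longrightarrow> r permutes {0..<length xs} \<Longrightarrow> act (s \<circ> r) xs = act s (act r xs)"
  by (rule nth_equalityI) (auto simp: permutes_inv_less o_inv_distrib permutes_bij)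

lemma mset_act: "s permutes {0..<length xs} \<Longrightarrow> mset (act s xs) = mset xs"
proof -
  assume "s permutes {0..<length xs}"
  then have "inv s permutes {..<length xs}"
    by (simp add: atLeast0LessThan permutes_inv)
  then show ?thesis
    by (simp add: act_def permute_list_def[symmetric])
qed

lemma sum_list_act:
  fixes xs :: "'a::comm_monoid_add list"
  shows "s permutes {0..<length xs} \<Longrightarrow> sum_list (act s xs) = sum_list xs"
  by (metis mset_act sum_mset_sum_list)

lemma length_concat_act:
  "s permutes {0..<length xs} \<Longrightarrow> length (concat (act s xs)) = sum_list (map length xs)"
  by (simp add: length_concat act_map[symmetric] sum_list_act)

section \<open>Blocks of a concatenation\<close>

lemma sum_list_concat: "sum_list (concat xss) = sum_list (map sum_list (xss::'a::monoid_add list list))"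
  by (induction xss) auto

lemma nth_concat_offs:
  "i < length Cs \<Longrightarrow> x < length (Cs ! i) \<Longrightarrow> concat Cs ! (offs (map length Cs) i + x) = Cs ! i ! x"
proof (induction Cs arbitrary: i)
  case (Cons C Cs)
  then show ?case by (cases i) (auto simp: offs_def nth_append)
qed simp

lemma take_concat_offs:
  "i < length Cs \<Longrightarrow> x \<le> length (Cs ! i) \<Longrightarrow>
   take (offs (map length Cs) i + x) (concat Cs) = concat (take i Cs) @ take x (Cs ! i)"
proof (induction Cs arbitrary: i)
  case (Cons C Cs)
  then show ?case by (cases i) (auto simp: offs_def)
qed simp

lemma offs_Suc: "k < length ls \<Longrightarrow> offs ls (Suc k) = offs ls k + ls ! k"
  by (simp add: offs_def take_Suc_conv_app_nth)

lemma offs_mono: "m \<le> n \<Longrightarrow> offs ls m \<le> offs (ls::nat list) n"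
  by (metis offs_def append_take_drop_id le_add1 sum_list_append take_add le_Suc_ex)

lemma offs_le_sum_list: "offs ls k \<le> sum_list (ls::nat list)"
  by (metis offs_def append_take_drop_id le_add1 sum_list_append)

lemma offs_add_less_sum_list:
  "i < length ls \<Longrightarrow> b < ls ! i \<Longrightarrow> offs ls i + b < sum_list (ls::nat list)"
  using offs_Suc[of i ls] offs_le_sum_list[of ls "Suc i"] by simp

lemma upt_eq_concat_blocks:
  "[0..<sum_list ls] = concat (map (\<lambda>j. [offs ls j..<offs ls j + ls ! j]) [0..<length ls])"
proof (induction ls rule: rev_induct)
  case (snoc a ls)
  have init: "map (\<lambda>j. [offs (ls @ [a]) j..<offs (ls @ [a]) j + (ls @ [a]) ! j]) [0..<length ls]
      = map (\<lambda>j. [offs ls j..<offs ls j + ls ! j]) [0..<length ls]"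
    by (rule map_cong) (auto simp: offs_def nth_append)
  have last: "offs (ls @ [a]) (length ls) = sum_list ls"
    by (simp add: offs_def)
  show ?case
    by (simp add: init last snoc[symmetric] upt_add_eq_append[of 0 "sum_list ls"])
qed simp

lemma block_decomp:
  assumes "a < sum_list (ls::nat list)"
  obtains i b where "i < length ls" "b < ls ! i" "a = offs ls i + b"
proof -
  have "a \<in> set [0..<sum_list ls]"
    using assms by simp
  then obtain j where "j < length ls" "a \<in> {offs ls j..<offs ls j + ls ! j}"
    unfolding upt_eq_concat_blocks by auto
  then show ?thesis using that[of j "a - offs ls j"] by auto
qed

lemma the_block_index:
  assumes i: "i < length ls" and b: "b < ls ! i"
  shows "(THE k. k < length ls \<and> offs ls k \<le> offs ls i + b \<and> offs ls i + b < offs ls (Suc k)) = i"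
proof (rule the_equality)
  show "i < length ls \<and> offs ls i \<le> offs ls i + b \<and> offs ls i + b < offs ls (Suc i)"
    using i b offs_Suc[OF i] by simp
next
  fix k assume k: "k < length ls \<and> offs ls k \<le> offs ls i + b \<and> offs ls i + b < offs ls (Suc k)"
  have "\<not> Suc k \<le> i" using offs_mono[of "Suc k" i ls] k by fastforce
  moreover have "\<not> Suc i \<le> k" using offs_mono[of "Suc i" k ls] k offs_Suc[OF i] b by fastforce
  ultimately show "k = i" by simp
qed

section \<open>The operad composition of the Barratt--Eccles operad\<close>

definition block_start :: "(nat \<Rightarrow> nat) \<Rightarrow> nat list \<Rightarrow> nat \<Rightarrow> nat" where
  "block_start s ls k = offs (act s ls) (s k)"

lemma nth_concat_act_block_start:
  assumes s: "s permutes {0..<length Bs}" and k: "k < length Bs" and x: "x < length (Bs ! k)"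
  shows "concat (act s Bs) ! (block_start s (map length Bs) k + x) = Bs ! k ! x"
proof -
  have "block_start s (map length Bs) k = offs (map length (act s Bs)) (s k)"
    unfolding block_start_def using s by (simp add: act_map)
  moreover have "s k < length (act s Bs)"
    using permutes_less[OF s k] by simp
  ultimately show ?thesis
    using nth_concat_offs[of "s k" "act s Bs" x] x nth_act_image[OF s k] by simp
qed

definition block_intervals :: "(nat \<Rightarrow> nat) \<Rightarrow> nat list \<Rightarrow> nat list list" where
  "block_intervals s ls = map (\<lambda>k. [block_start s ls k..<block_start s ls k + ls ! k]) [0..<length ls]"

lemma concat_act_block_intervals:
  assumes s: "s permutes {0..<length ls}"
  shows "concat (act s (block_intervals s ls)) = [0..<sum_list ls]"
proof -
  define L where "L = act s ls"
  have "act s (block_intervals s ls) =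
        map (\<lambda>j. [block_start s ls (inv s j)..<block_start s ls (inv s j) + ls ! (inv s j)]) [0..<length ls]"
    unfolding block_intervals_def by (rule act_map_upt[OF s])
  also have "\<dots> = map (\<lambda>j. [offs L j..<offs L j + L ! j]) [0..<length L]"
    by (rule map_cong) (auto simp: L_def block_start_def permutes_inverses[OF s])
  finally show ?thesis
    using sum_list_act[OF s] upt_eq_concat_blocks[of L] by (simp add: L_def)
qed

lemma gamma_block:
  assumes s: "s permutes {0..<length ls}" and i: "i < length ls" and b: "b < ls ! i"
  shows "gamma s ts ls (offs ls i + b) = block_start s ls i + (ts ! i) b"
proof -
  have si: "s i < length ls"
    using permutes_less[OF s i] .
  have "(\<Sum>j<s i. ls ! inv s j) = (\<Sum>j<s i. act s ls ! j)"
    using si by (intro sum.cong) auto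
  also have "\<dots> = block_start s ls i"
    using si by (simp add: block_start_def offs_def sum_list_sum_nth atLeast0LessThan min_absorb2)
  finally show ?thesis
    using offs_add_less_sum_list[OF i b] by (simp add: gamma_def the_block_index[OF i b] Let_def)
qed

locale gamma_args =
  fixes s :: "nat \<Rightarrow> nat" and ts :: "(nat \<Rightarrow> nat) list" and ls :: "nat list"
  assumes s: "s permutes {0..<length ls}"
    and length_ts: "length ts = length ls"
    and ts: "\<And>i. i < length ls \<Longrightarrow> ts ! i permutes {0..<ls ! i}"
begin

lemma map_length_map2_act:
  assumes Xs: "map length Xs = ls"
  shows "map length (map2 act ts Xs) = ls"
proof -
  have lXs: "length Xs = length ls"
    using Xs by (metis length_map)
  show ?thesis
    by (rule nth_equalityI) (simp_all add: lXs length_ts, metis Xs nth_map lXs)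
qed

lemma nth_concat_act_map2_act_gamma:
  assumes Xs: "map length Xs = ls" and i: "i < length ls" and b: "b < ls ! i"
  shows "concat (act s (map2 act ts Xs)) ! gamma s ts ls (offs ls i + b) = concat Xs ! (offs ls i + b)"
proof -
  define Bs where "Bs = map2 act ts Xs"
  have lXs: "length Xs = length ls"
    using Xs by (metis length_map)
  have lBs: "length Bs = length ls"
    using lXs length_ts by (simp add: Bs_def)
  have Bs_len: "map length Bs = ls"
    unfolding Bs_def using map_length_map2_act[OF Xs] .
  have Bi: "Bs ! i = act (ts ! i) (Xs ! i)"
    using i lXs length_ts by (simp add: Bs_def)
  have lXi: "length (Xs ! i) = ls ! i"
    using Xs i lXs by (metis nth_map)
  have tsi: "ts ! i permutes {0..<length (Xs ! i)}"
    using ts[OF i] lXi by simp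
  have tb: "(ts ! i) b < length (Bs ! i)"
    using permutes_less[OF tsi, of b] b lXi Bi by simp
  have sB: "s permutes {0..<length Bs}"
    using s lBs by simp
  have "concat (act s Bs) ! (block_start s ls i + (ts ! i) b) = Bs ! i ! (ts ! i) b"
    using nth_concat_act_block_start[OF sB _ tb] i lBs Bs_len by simp
  also have "\<dots> = Xs ! i ! b"
    using Bi nth_act_image[OF tsi, of b] b lXi by simp
  also have "\<dots> = concat Xs ! (offs ls i + b)"
    using nth_concat_offs[of i Xs b] Xs i b lXs lXi by simp
  finally show ?thesis
    using gamma_block[OF s i b] by (simp add: Bs_def)
qed

lemma gamma_block_less:
  assumes i: "i < length ls" and b: "b < ls ! i"
  shows "gamma s ts ls (offs ls i + b) < sum_list ls"
proof -
  have si: "s i < length ls"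
    using permutes_less[OF s i] .
  have "(ts ! i) b < act s ls ! s i"
    using permutes_less[OF ts[OF i] b] nth_act_image[of s ls i] s i by simp
  then have "block_start s ls i + (ts ! i) b < offs (act s ls) (Suc (s i))"
    unfolding block_start_def using offs_Suc[of "s i" "act s ls"] si by simp
  also have "\<dots> \<le> sum_list ls"
    using offs_le_sum_list[of "act s ls"] sum_list_act[OF s] by simp
  finally show ?thesis
    using gamma_block[OF s i b] by simp
qed

lemma gamma_permutes: "gamma s ts ls permutes {0..<sum_list ls}"
proof (rule inj_imp_permutes)
  define Ys where "Ys = map (\<lambda>j. [offs ls j..<offs ls j + ls ! j]) [0..<length ls]"
  have Ys: "map length Ys = ls"
    by (intro nth_equalityI) (auto simp: Ys_def)
  have cYs: "concat Ys = [0..<sum_list ls]"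
    unfolding Ys_def by (rule upt_eq_concat_blocks[symmetric])
  have "concat (act s (map2 act ts Ys)) ! gamma s ts ls a = a" if a: "a < sum_list ls" for a
  proof -
    obtain i b where "i < length ls" "b < ls ! i" "a = offs ls i + b"
      using block_decomp[OF a] by blast
    then show ?thesis
      using nth_concat_act_map2_act_gamma[OF Ys] a cYs by simp
  qed
  then show "inj_on (gamma s ts ls) {0..<sum_list ls}"
    by (metis inj_onI atLeastLessThan_iff)
  show "gamma s ts ls a \<in> {0..<sum_list ls}" if "a \<in> {0..<sum_list ls}" for a
    using that gamma_block_less by (auto elim: block_decomp)
  show "gamma s ts ls a = a" if "a \<notin> {0..<sum_list ls}" for a
    using that by (simp add: gamma_def)
qed simp

lemma concat_act_map2_act:
  assumes Xs: "map length Xs = ls"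
  shows "concat (act s (map2 act ts Xs)) = act (gamma s ts ls) (concat Xs)"
proof (rule nth_equalityI)
  have len: "length (concat Xs) = sum_list ls"
    using Xs by (simp add: length_concat)
  have gp: "gamma s ts ls permutes {0..<length (concat Xs)}"
    using gamma_permutes len by simp
  have "length Xs = length ls"
    using Xs by (metis length_map)
  then have "length (map2 act ts Xs) = length ls"
    using length_ts by simp
  then have "length (concat (act s (map2 act ts Xs))) = sum_list ls"
    using length_concat_act[of s "map2 act ts Xs"] map_length_map2_act[OF Xs] s by simp
  then show "length (concat (act s (map2 act ts Xs))) = length (act (gamma s ts ls) (concat Xs))"
    using len by simp
  fix j assume "j < length (concat (act s (map2 act ts Xs)))"
  then have j: "j < length (concat Xs)"
    using len \<open>length (concat (act s _)) = sum_list ls\<close> by simp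
  define a where "a = inv (gamma s ts ls) j"
  have a: "a < sum_list ls"
    using permutes_inv_less[OF gp j] len a_def by simp
  have ja: "j = gamma s ts ls a"
    using a_def permutes_inverses(1)[OF gp] by simp
  obtain i b where "i < length ls" "b < ls ! i" "a = offs ls i + b"
    using block_decomp[OF a] by blast
  then have "concat (act s (map2 act ts Xs)) ! j = concat Xs ! a"
    using nth_concat_act_map2_act_gamma[OF Xs] ja by simp
  also have "\<dots> = act (gamma s ts ls) (concat Xs) ! j"
    using j a_def by simp
  finally show "concat (act s (map2 act ts Xs)) ! j = act (gamma s ts ls) (concat Xs) ! j" .
qed

lemma map_sum_list_map2_act:
  fixes Xs :: "'a::comm_monoid_add list list"
  assumes Xs: "map length Xs = ls"
  shows "map sum_list (map2 act ts Xs) = map sum_list Xs"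
proof -
  have lXs: "length Xs = length ls"
    using Xs by (metis length_map)
  have "ts ! k permutes {0..<length (Xs ! k)}" if "k < length ls" for k
    using ts[OF that] Xs that lXs by (metis nth_map)
  then show ?thesis
    using lXs length_ts by (intro nth_equalityI) (simp_all add: sum_list_act)
qed

lemma block_start_gamma:
  assumes Ls: "map length Ls = ls" and i: "i < length ls" and b: "b < ls ! i"
  shows "block_start (gamma s ts ls) (concat Ls) (offs ls i + b)
    = block_start s (map sum_list Ls) i + block_start (ts ! i) (Ls ! i) b"
proof -
  define Bs where "Bs = map2 act ts Ls"
  have lLs: "length Ls = length ls"
    using Ls by (metis length_map)
  have Bs_len: "map length Bs = ls"
    unfolding Bs_def by (rule map_length_map2_act[OF Ls])
  have lBs: "length Bs = length ls"
    using lLs length_ts by (simp add: Bs_def)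
  have sB: "s permutes {0..<length Bs}"
    using s lBs by simp
  have si: "s i < length Bs"
    using permutes_less[OF s i] lBs by simp
  have Bi: "Bs ! i = act (ts ! i) (Ls ! i)"
    using i lLs length_ts by (simp add: Bs_def)
  have lLi: "length (Ls ! i) = ls ! i"
    using Ls i lLs by (metis nth_map)
  have tsi: "ts ! i permutes {0..<length (Ls ! i)}"
    using ts[OF i] lLi by simp
  have tb: "(ts ! i) b \<le> length (act s Bs ! s i)"
    using permutes_less[OF tsi, of b] b lLi nth_act_image[OF sB, of i] i lBs Bi by simp
  have "block_start (gamma s ts ls) (concat Ls) (offs ls i + b)
      = offs (concat (act s Bs)) (offs (map length (act s Bs)) (s i) + (ts ! i) b)"
    using concat_act_map2_act[OF Ls] gamma_block[OF s i b] act_map[OF sB, of length] Bs_len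
    by (simp add: Bs_def block_start_def)
  also have "\<dots> = sum_list (concat (take (s i) (act s Bs)) @ take ((ts ! i) b) (act s Bs ! s i))"
    unfolding offs_def[of "concat _"] using take_concat_offs[of "s i" "act s Bs" "(ts ! i) b"] si tb by simp
  also have "\<dots> = offs (map sum_list (act s Bs)) (s i) + offs (act (ts ! i) (Ls ! i)) ((ts ! i) b)"
    using nth_act_image[OF sB, of i] i lBs Bi
    by (simp add: offs_def sum_list_concat take_map)
  also have "map sum_list (act s Bs) = act s (map sum_list Ls)"
    using act_map[OF sB, of sum_list] map_sum_list_map2_act[OF Ls] by (simp add: Bs_def)
  finally show ?thesis
    by (simp add: block_start_def)
qed

end

section \<open>Morphisms of Delta H_+\<close>

definition fibre_mset :: "(nat \<times> bool) list \<Rightarrow> nat multiset" where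
  "fibre_mset xs = mset (map fst xs)"

definition orient :: "bool \<Rightarrow> (nat \<times> bool) list \<Rightarrow> (nat \<times> bool) list" where
  "orient e xs = (if e then flipfib xs else xs)"

lemma dhom_iff_mset: "F \<in> dhom p q \<longleftrightarrow> length F = q \<and> fibre_mset (concat F) = mset [0..<p]"
proof -
  have "distinct xs \<and> set xs = {0..<p} \<longleftrightarrow> mset xs = mset [0..<p]" for xs :: "nat list"
    by (metis distinct_upt mset_eq_imp_distinct_iff mset_eq_setD set_eq_iff_mset_eq_distinct set_upt)
  then show ?thesis
    unfolding dhom_def fibre_mset_def by blast
qed

lemma dhom_index_less:
  assumes "F \<in> dhom p q"
  shows "\<forall>(x, e) \<in> set (concat F). x < p"
proof -
  have "fst ` set (concat F) = {0..<p}"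
    using assms by (simp add: dhom_def)
  then show ?thesis
    by force
qed

lemma fibre_mset_Nil [simp]: "fibre_mset [] = {#}"
  by (simp add: fibre_mset_def)

lemma fibre_mset_append [simp]: "fibre_mset (xs @ ys) = fibre_mset xs + fibre_mset ys"
  by (simp add: fibre_mset_def)

lemma fibre_mset_concat: "fibre_mset (concat xss) = sum_list (map fibre_mset xss)"
  by (induction xss) (auto simp: fibre_mset_def)

lemma fibre_mset_orient [simp]: "fibre_mset (orient e xs) = fibre_mset xs"
  unfolding orient_def flipfib_def fibre_mset_def by (induction xs) auto

lemma flipfib_flipfib [simp]: "flipfib (flipfib xs) = xs"
  by (simp add: flipfib_def rev_map o_def case_prod_beta)

lemma flipfib_Nil [simp]: "flipfib [] = []"
  by (simp add: flipfib_def)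

lemma flipfib_append [simp]: "flipfib (xs @ ys) = flipfib ys @ flipfib xs"
  by (simp add: flipfib_def)

lemma flipfib_Cons: "flipfib (x # xs) = flipfib xs @ [(fst x, \<not> snd x)]"
  by (simp add: flipfib_def case_prod_beta)

lemma dcomp_eq_orient: "dcomp G F = map (\<lambda>fib. concat (map (\<lambda>(j, e). orient e (F ! j)) fib)) G"
  by (simp add: dcomp_def orient_def)

lemma concat_dcomp: "concat (dcomp G F) = concat (map (\<lambda>(j, e). orient e (F ! j)) (concat G))"
  by (induction G) (auto simp: dcomp_eq_orient)

lemma sum_list_map_mset_eq:
  fixes f :: "'a \<Rightarrow> 'b::comm_monoid_add"
  shows "mset xs = mset ys \<Longrightarrow> sum_list (map f xs) = sum_list (map f ys)"
  using sum_mset_sum_list[of "map f xs"] sum_mset_sum_list[of "map f ys"] by simp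

lemma dcomp_dhom:
  assumes F: "F \<in> dhom p q" and G: "G \<in> dhom q r"
  shows "dcomp G F \<in> dhom p r"
proof -
  have lF: "length F = q" and mF: "fibre_mset (concat F) = mset [0..<p]"
    using F by (auto simp: dhom_iff_mset)
  have mG: "mset (map fst (concat G)) = mset [0..<q]"
    using G by (auto simp: dhom_iff_mset fibre_mset_def)
  have fibres: "fibre_mset (concat (map (\<lambda>(j, e). orient e (F ! j)) L))
      = sum_list (map (\<lambda>j. fibre_mset (F ! j)) (map fst L))" for L
    by (induction L) (auto simp: fibre_mset_concat)
  have "fibre_mset (concat (dcomp G F)) = sum_list (map (\<lambda>j. fibre_mset (F ! j)) (map fst (concat G)))"
    unfolding concat_dcomp fibres ..
  also have "\<dots> = sum_list (map (\<lambda>j. fibre_mset (F ! j)) [0..<q])"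
    using mG by (rule sum_list_map_mset_eq)
  also have "map (\<lambda>j. fibre_mset (F ! j)) [0..<q] = map fibre_mset F"
    using lF by (intro nth_equalityI) auto
  finally have "fibre_mset (concat (dcomp G F)) = mset [0..<p]"
    using mF by (simp add: fibre_mset_concat)
  moreover have "length (dcomp G F) = r"
    using G by (simp add: dhom_iff_mset dcomp_def)
  ultimately show ?thesis
    unfolding dhom_iff_mset by blast
qed

lemma orient_concat_map:
  "orient e (concat (map (\<lambda>(j, e). orient e (F ! j)) ys))
    = concat (map (\<lambda>(j, e). orient e (F ! j)) (orient e ys))"
proof (cases e)
  case True
  have "flipfib (concat (map (\<lambda>(j, e). orient e (F ! j)) ys))
      = concat (map (\<lambda>(j, e). orient e (F ! j)) (flipfib ys))"
    by (induction ys) (auto simp: flipfib_Cons orient_def)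
  then show ?thesis
    using True by (simp add: orient_def)
qed (simp add: orient_def)

lemma dcomp_assoc:
  assumes "\<forall>(k, e) \<in> set (concat H). k < length G"
  shows "dcomp H (dcomp G F) = dcomp (dcomp H G) F"
proof -
  have "concat (map (\<lambda>(j, e). orient e (dcomp G F ! j)) fib) =
        concat (map (\<lambda>(j, e). orient e (F ! j)) (concat (map (\<lambda>(j, e). orient e (G ! j)) fib)))"
    if "\<forall>(k, e) \<in> set fib. k < length G" for fib
    using that by (induction fib) (auto simp: dcomp_eq_orient orient_concat_map)
  then show ?thesis
    using assms unfolding dcomp_eq_orient[of H "dcomp G F"] dcomp_eq_orient[of "dcomp H G" F]
    unfolding dcomp_eq_orient[of H G] map_map o_def
    by (intro map_cong) auto
qed

lemma length_did [simp]: "length (did p) = p"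
  by (simp add: did_def)

lemma did_dhom: "did p \<in> dhom p p"
proof -
  have "map fst (concat (map (\<lambda>i. [(i, False)]) xs)) = xs" for xs :: "nat list"
    by (induction xs) auto
  then show ?thesis
    by (simp add: dhom_iff_mset did_def fibre_mset_def)
qed

lemma dcomp_did_right:
  assumes "\<forall>(x, e) \<in> set (concat F). x < p"
  shows "dcomp F (did p) = F"
proof -
  have "concat (map (\<lambda>(j, e). orient e (did p ! j)) fib) = fib" if "\<forall>(x, e) \<in> set fib. x < p" for fib
    using that by (induction fib) (auto simp: did_def orient_def flipfib_def)
  then show ?thesis
    using assms unfolding dcomp_eq_orient by (simp add: map_idI)
qed

lemma dcomp_did_left: "dcomp (did (length F)) F = F"
  by (rule nth_equalityI) (auto simp: dcomp_eq_orient did_def orient_def)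

lemma HM_did: "HM bar (did (length ms)) ms = ms"
  by (rule nth_equalityI) (auto simp: HM_def did_def)

definition label_entry :: "('m \<Rightarrow> 'm) \<Rightarrow> 'm list \<Rightarrow> nat \<times> bool \<Rightarrow> 'm" where
  "label_entry bar ms = (\<lambda>(x, e). if e then bar (ms ! x) else ms ! x)"

lemma label_entry_Pair [simp]: "label_entry bar ms (x, e) = (if e then bar (ms ! x) else ms ! x)"
  by (simp add: label_entry_def)

lemma HM_eq_label_entry: "HM bar F ms = map (\<lambda>fib. prod_list (map (label_entry bar ms) fib)) F"
  by (simp add: HM_def label_entry_def)

lemma Ar_tuple_cat: "X \<in> Ar (tuple_cat bar) \<longleftrightarrow> fst X \<in> dhom (length (snd X)) (length (fst X))"
proof -
  have "X \<in> Ar (tuple_cat bar) \<longleftrightarrow> (\<exists>q. fst X \<in> dhom (length (snd X)) q)"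
    by (simp add: tuple_cat_def case_prod_beta)
  then show ?thesis
    by (metis dhom_iff_mset)
qed

lemma Ob_tuple_cat [simp]: "Ob (tuple_cat bar) = UNIV"
  and Dom_tuple_cat: "Dom (tuple_cat bar) = snd"
  and Cod_tuple_cat: "Cod (tuple_cat bar) = (\<lambda>X. HM bar (fst X) (snd X))"
  and Id_tuple_cat: "Id (tuple_cat bar) = (\<lambda>ms. (did (length ms), ms))"
  and Comp_tuple_cat: "Comp (tuple_cat bar) = (\<lambda>X Y. (dcomp (fst X) (fst Y), snd Y))"
  by (simp_all add: tuple_cat_def fun_eq_iff case_prod_beta)

lemmas tuple_cat_simps = Ar_tuple_cat Dom_tuple_cat Cod_tuple_cat Id_tuple_cat Comp_tuple_cat

lemma Ar_tuple_cat_index_less: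
  "X \<in> Ar (tuple_cat bar) \<Longrightarrow> \<forall>(x, e) \<in> set (concat (fst X)). x < length (snd X)"
  unfolding Ar_tuple_cat using dhom_index_less by blast

context
  fixes bar :: "'m::monoid_mult \<Rightarrow> 'm"
  assumes bar: "involution bar"
begin

lemma prod_list_flipfib:
  "prod_list (map (label_entry bar ms) (flipfib xs)) = bar (prod_list (map (label_entry bar ms) xs))"
  using bar by (induction xs) (auto simp: flipfib_Cons involution_def)

lemma HM_dcomp:
  assumes "\<forall>(k, e) \<in> set (concat G). k < length F"
  shows "HM bar (dcomp G F) ms = HM bar G (HM bar F ms)"
proof -
  have "prod_list (map (label_entry bar ms) (concat (map (\<lambda>(j, e). orient e (F ! j)) fib))) =
        prod_list (map (label_entry bar (HM bar F ms)) fib)"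
    if "\<forall>(k, e) \<in> set fib. k < length F" for fib
    using that by (induction fib) (auto simp: orient_def prod_list_flipfib HM_eq_label_entry)
  then show ?thesis
    using assms
    unfolding HM_eq_label_entry[of bar "dcomp G F"] HM_eq_label_entry[of bar G]
    unfolding dcomp_eq_orient map_map o_def
    by (intro map_cong) auto
qed

lemma Comp_tuple_cat_closed:
  assumes f: "f \<in> Ar (tuple_cat bar)" and g: "g \<in> Ar (tuple_cat bar)"
    and fg: "Cod (tuple_cat bar) f = Dom (tuple_cat bar) g"
  shows "Comp (tuple_cat bar) g f \<in> Ar (tuple_cat bar) \<and>
    Dom (tuple_cat bar) (Comp (tuple_cat bar) g f) = Dom (tuple_cat bar) f \<and>
    Cod (tuple_cat bar) (Comp (tuple_cat bar) g f) = Cod (tuple_cat bar) g"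
proof -
  have "snd g = HM bar (fst f) (snd f)"
    using fg by (simp add: tuple_cat_simps)
  then have "length (snd g) = length (fst f)"
    by (simp add: HM_def)
  then have "dcomp (fst g) (fst f) \<in> dhom (length (snd f)) (length (fst g))"
    and "\<forall>(k, e) \<in> set (concat (fst g)). k < length (fst f)"
    using f g dcomp_dhom Ar_tuple_cat_index_less[OF g] by (auto simp: Ar_tuple_cat)
  then show ?thesis
    using fg HM_dcomp by (simp add: tuple_cat_simps dcomp_def)
qed

lemma category_tuple_cat: "category (tuple_cat bar)"
proof -
  have assoc: "Comp (tuple_cat bar) h (Comp (tuple_cat bar) g f)
      = Comp (tuple_cat bar) (Comp (tuple_cat bar) h g) f"
    if "h \<in> Ar (tuple_cat bar)" "Cod (tuple_cat bar) g = Dom (tuple_cat bar) h" for f g h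
  proof -
    have "snd h = HM bar (fst g) (snd g)"
      using that(2) by (simp add: tuple_cat_simps)
    then have "length (snd h) = length (fst g)"
      by (simp add: HM_def)
    then show ?thesis
      using Ar_tuple_cat_index_less[OF that(1)] by (simp add: tuple_cat_simps dcomp_assoc)
  qed
  have ident: "Id (tuple_cat bar) ms \<in> Ar (tuple_cat bar) \<and> Dom (tuple_cat bar) (Id (tuple_cat bar) ms) = ms
      \<and> Cod (tuple_cat bar) (Id (tuple_cat bar) ms) = ms" for ms
    using did_dhom HM_did by (simp add: tuple_cat_simps)
  have unit: "Comp (tuple_cat bar) f (Id (tuple_cat bar) (Dom (tuple_cat bar) f)) = f \<and>
      Comp (tuple_cat bar) (Id (tuple_cat bar) (Cod (tuple_cat bar) f)) f = f"
    if "f \<in> Ar (tuple_cat bar)" for f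
    using dcomp_did_right[OF Ar_tuple_cat_index_less[OF that]] dcomp_did_left[of "fst f"]
    by (simp add: tuple_cat_simps HM_def)
  show ?thesis
    unfolding category_def Ob_tuple_cat using Comp_tuple_cat_closed assoc ident unit by blast
qed

end

section \<open>The structure maps\<close>

definition theta_ob :: "(nat \<Rightarrow> nat) \<Rightarrow> 'x list list \<Rightarrow> 'x list" where
  "theta_ob s xss = concat (act s xss)"

definition shift_fib :: "nat \<Rightarrow> (nat \<times> bool) list \<Rightarrow> (nat \<times> bool) list" where
  "shift_fib n fib = map (\<lambda>(x, e). (x + n, e)) fib"

definition shift :: "nat \<Rightarrow> dmor \<Rightarrow> dmor" where
  "shift n F = map (shift_fib n) F"

text \<open>The \<open>k\<close>-th morphism acts on the \<open>k\<close>-th block of the \<open>s\<close>-ordered concatenation of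
  the sources, so its source indices are shifted by the start of that block.\<close>

definition block_mors :: "(nat \<Rightarrow> nat) \<Rightarrow> (dmor \<times> 'x list) list \<Rightarrow> dmor list" where
  "block_mors s fs =
     map (\<lambda>k. shift (block_start s (map (length \<circ> snd) fs) k) (fst (fs ! k))) [0..<length fs]"

definition theta_ar ::
  "(nat \<Rightarrow> nat) \<Rightarrow> (nat \<Rightarrow> nat) \<Rightarrow> (dmor \<times> 'x list) list \<Rightarrow> dmor \<times> 'x list" where
  "theta_ar s s' fs = (theta_ob s' (block_mors s fs), theta_ob s (map snd fs))"

lemma length_block_mors [simp]: "length (block_mors s fs) = length fs"
  by (simp add: block_mors_def)

lemma nth_block_mors [simp]:
  "k < length fs \<Longrightarrow>
    block_mors s fs ! k = shift (block_start s (map (length \<circ> snd) fs) k) (fst (fs ! k))"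
  by (simp add: block_mors_def)

lemma length_theta_ob:
  "s permutes {0..<length xss} \<Longrightarrow> length (theta_ob s xss) = sum_list (map length xss)"
  by (simp add: theta_ob_def length_concat_act)

lemma mset_theta_ob: "s permutes {0..<length xss} \<Longrightarrow> mset (theta_ob s xss) = mset (concat xss)"
  by (simp add: theta_ob_def mset_concat act_map[symmetric] sum_list_act)

lemma fibre_mset_theta_ob:
  "s permutes {0..<length xss} \<Longrightarrow> fibre_mset (theta_ob s xss) = fibre_mset (concat xss)"
  by (simp add: fibre_mset_def mset_theta_ob)

lemma concat_theta_ob:
  assumes "s permutes {0..<length X}"
  shows "concat (theta_ob s X) = theta_ob s (map concat X)"
proof -
  have "concat (concat Y) = concat (map concat Y)" for Y :: "'a list list list"
    by (induction Y) auto
  then show ?thesis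
    using assms by (simp add: theta_ob_def act_map)
qed

lemma shift_theta_ob:
  assumes "s permutes {0..<length X}"
  shows "shift a (theta_ob s X) = theta_ob s (map (shift a) X)"
proof -
  have "shift a = map (shift_fib a)"
    by (simp add: fun_eq_iff shift_def)
  then show ?thesis
    using assms by (simp add: theta_ob_def act_map map_concat)
qed

lemma theta_ob_unit: "theta_ob id [x] = x"
  by (simp add: theta_ob_def)

lemma theta_ob_equivariant:
  "s permutes {0..<length xs} \<Longrightarrow> r permutes {0..<length xs} \<Longrightarrow> theta_ob (s \<circ> r) xs = theta_ob s (act r xs)"
  by (simp add: theta_ob_def act_comp)

lemma (in gamma_args) theta_ob_assoc:
  assumes "map length xss = ls"
  shows "theta_ob s (map2 theta_ob ts xss) = theta_ob (gamma s ts ls) (concat xss)"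
proof -
  have "length (map2 act ts xss) = length ls"
    using assms length_ts by (metis length_map map_length_map2_act)
  then have "concat (theta_ob s (map2 act ts xss)) = theta_ob s (map concat (map2 act ts xss))"
    using s by (simp add: concat_theta_ob)
  moreover have "map2 theta_ob ts xss = map concat (map2 act ts xss)"
    by (simp add: theta_ob_def case_prod_beta)
  ultimately have "theta_ob s (map2 theta_ob ts xss) = concat (theta_ob s (map2 act ts xss))"
    by (simp only:)
  also have "\<dots> = theta_ob (gamma s ts ls) (concat xss)"
    using concat_act_map2_act[OF assms] by (simp add: theta_ob_def)
  finally show ?thesis .
qed

lemma fibre_mset_shift_fib: "fibre_mset (shift_fib n fib) = image_mset (\<lambda>x. x + n) (fibre_mset fib)"
  by (induction fib) (auto simp: shift_fib_def fibre_mset_def)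

lemma fibre_mset_concat_shift:
  "fibre_mset (concat (shift n F)) = image_mset (\<lambda>x. x + n) (fibre_mset (concat F))"
  by (induction F) (auto simp: shift_def fibre_mset_shift_fib)

lemma theta_ar_dhom:
  assumes s: "s permutes {0..<length fs}" and s': "s' permutes {0..<length fs}"
    and dhom: "\<And>k. k < length fs \<Longrightarrow>
      fst (fs ! k) \<in> dhom (length (snd (fs ! k))) (length (fst (fs ! k)))"
  shows "fst (theta_ar s s' fs) \<in>
    dhom (length (snd (theta_ar s s' fs))) (length (fst (theta_ar s s' fs)))"
proof -
  define lens where "lens = map (length \<circ> snd) fs"
  define I where "I = block_intervals s lens"
  have sI: "s permutes {0..<length I}" and slens: "s permutes {0..<length lens}"
    using s by (simp_all add: I_def block_intervals_def lens_def)
  have block: "fibre_mset (concat (block_mors s fs ! k)) = mset (I ! k)" if "k < length fs" for k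
    using that dhom[OF that]
    by (simp add: dhom_iff_mset fibre_mset_concat_shift I_def block_intervals_def lens_def
        map_add_upt[symmetric] add.commute del: mset_upt)
  have blocks: "map (\<lambda>B. fibre_mset (concat B)) (block_mors s fs) = map mset I"
    by (rule nth_equalityI) (simp_all add: block I_def block_intervals_def lens_def del: nth_block_mors)
  have "fibre_mset (concat (fst (theta_ar s s' fs))) = fibre_mset (concat (map concat (block_mors s fs)))"
    using s' by (simp add: theta_ar_def concat_theta_ob fibre_mset_theta_ob)
  also have "\<dots> = sum_list (map mset I)"
    unfolding fibre_mset_concat[of "map concat _"] map_map o_def blocks ..
  also have "\<dots> = mset (theta_ob s I)"
    using mset_theta_ob[OF sI] by (simp add: mset_concat)
  also have "\<dots> = mset [0..<length (snd (theta_ar s s' fs))]"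
    using concat_act_block_intervals[OF slens] length_theta_ob[of s "map snd fs"] s
    by (simp add: theta_ob_def theta_ar_def I_def block_intervals_def lens_def o_def)
  finally show ?thesis
    unfolding dhom_iff_mset by simp
qed

lemma theta_ob_map_map:
  "s permutes {0..<length X} \<Longrightarrow> theta_ob s (map (map f) X) = map f (theta_ob s X)"
  by (simp add: theta_ob_def act_map map_concat)

lemma shift_did: "shift n (did l) = map (\<lambda>i. [(i, False)]) [n..<n + l]"
proof -
  have "shift n (did l) = map (\<lambda>i. [(i, False)]) (map (\<lambda>i. i + n) [0..<l])"
    by (simp add: shift_def did_def shift_fib_def)
  then show ?thesis
    by (simp add: map_add_upt add.commute)
qed

lemma theta_ar_id:
  assumes s: "s permutes {0..<length xs}"
  shows "theta_ar s s (map (\<lambda>ms. (did (length ms), ms)) xs)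
    = (did (length (theta_ob s xs)), theta_ob s xs)"
proof -
  define lens where "lens = map length xs"
  define I where "I = block_intervals s lens"
  have slens: "s permutes {0..<length lens}" and sI: "s permutes {0..<length I}"
    using s by (simp_all add: lens_def I_def block_intervals_def)
  have "block_mors s (map (\<lambda>ms. (did (length ms), ms)) xs) = map (map (\<lambda>i. [(i, False)])) I"
    by (rule nth_equalityI) (auto simp: shift_did I_def block_intervals_def lens_def o_def)
  then have "fst (theta_ar s s (map (\<lambda>ms. (did (length ms), ms)) xs))
      = map (\<lambda>i. [(i, False)]) (theta_ob s I)"
    using sI by (simp add: theta_ar_def theta_ob_map_map)
  also have "\<dots> = did (length (theta_ob s xs))"
    using concat_act_block_intervals[OF slens] length_theta_ob[OF s]
    by (simp add: theta_ob_def did_def I_def block_intervals_def lens_def)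
  finally show ?thesis
    by (simp add: theta_ar_def prod_eq_iff o_def)
qed

lemma theta_ar_unit: "theta_ar id id [f] = f"
proof -
  have "shift_fib 0 = id"
    by (simp add: fun_eq_iff shift_fib_def case_prod_beta)
  then have "shift 0 F = F" for F
    by (simp add: shift_def)
  then show ?thesis
    by (simp add: theta_ar_def theta_ob_def block_mors_def block_start_def offs_def)
qed

lemma block_start_comp:
  assumes "s permutes {0..<length ls}" and "r permutes {0..<length ls}"
  shows "block_start (s \<circ> r) ls k = block_start s (act r ls) (r k)"
  using assms by (simp add: block_start_def act_comp)

lemma block_mors_equivariant:
  assumes s: "s permutes {0..<length fs}" and r: "r permutes {0..<length fs}"
  shows "act r (block_mors (s \<circ> r) fs) = block_mors s (act r fs)"
proof (rule nth_equalityI)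
  fix k assume "k < length (act r (block_mors (s \<circ> r) fs))"
  then have k: "k < length fs"
    by simp
  have lens: "map (length \<circ> snd) (act r fs) = act r (map (length \<circ> snd) fs)"
    by (rule act_map[OF r, symmetric])
  have "block_start (s \<circ> r) (map (length \<circ> snd) fs) (inv r k)
      = block_start s (map (length \<circ> snd) (act r fs)) k"
    using block_start_comp[of s "map (length \<circ> snd) fs" r] s r permutes_inverses(1)[OF r] lens by simp
  then show "act r (block_mors (s \<circ> r) fs) ! k = block_mors s (act r fs) ! k"
    using k permutes_inv_less[OF r k] by simp
qed simp

lemma theta_ar_equivariant:
  assumes s: "s permutes {0..<length fs}" and s': "s' permutes {0..<length fs}"
    and r: "r permutes {0..<length fs}"
  shows "theta_ar (s \<circ> r) (s' \<circ> r) fs = theta_ar s s' (act r fs)"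
  using theta_ob_equivariant[of s' "block_mors (s \<circ> r) fs" r] theta_ob_equivariant[of s "map snd fs" r]
    block_mors_equivariant[OF s r] act_map[OF r, of snd] s s' r
  by (simp add: theta_ar_def)

lemma shift_shift: "shift a (shift b F) = shift (b + a) F"
  by (simp add: shift_def shift_fib_def case_prod_beta add.assoc)

lemma (in gamma_args) block_mors_gamma:
  assumes fss: "map length fss = ls"
  shows "block_mors (gamma s ts ls) (concat fss) =
    concat (map (\<lambda>i. map (shift (block_start s (map (sum_list \<circ> map (length \<circ> snd)) fss) i))
                          (block_mors (ts ! i) (fss ! i))) [0..<length ls])"
    (is "_ = concat ?Z")
proof -
  have lfss: "length fss = length ls"
    using fss by (metis length_map)
  have lfi: "length (fss ! i) = ls ! i" if "i < length ls" for i
    using fss that lfss by (metis nth_map)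
  have Z_len: "map length ?Z = ls"
    using lfss lfi by (intro nth_equalityI) simp_all
  have len: "length (concat fss) = sum_list ls"
    using fss by (simp add: length_concat)
  have "block_mors (gamma s ts ls) (concat fss) ! c = concat ?Z ! c" if c: "c < sum_list ls" for c
  proof -
    obtain i b where ib: "i < length ls" "b < ls ! i" "c = offs ls i + b"
      using block_decomp[OF c] by blast
    have lenss: "map length (map (map (length \<circ> snd)) fss) = ls"
      using fss by (simp add: o_def)
    have "block_start (gamma s ts ls) (map (length \<circ> snd) (concat fss)) c
        = block_start (ts ! i) (map (length \<circ> snd) (fss ! i)) b
          + block_start s (map (sum_list \<circ> map (length \<circ> snd)) fss) i"
      using block_start_gamma[OF lenss ib(1,2)] ib(1,3) lfss by (simp add: map_concat)
    moreover have "concat fss ! c = fss ! i ! b"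
      using nth_concat_offs[of i fss b] ib lfss lfi fss by simp
    moreover have "concat ?Z ! c = ?Z ! i ! b"
      using nth_concat_offs[of i ?Z b] ib Z_len lfi by simp
    ultimately show ?thesis
      using ib lfi c len by (simp add: shift_shift)
  qed
  then show ?thesis
    using Z_len len by (intro nth_equalityI) (simp_all add: length_concat)
qed

lemma block_mors_map_theta_ar:
  assumes lfss: "length fss = n"
    and ts: "\<And>i. i < n \<Longrightarrow> ts ! i permutes {0..<length (fss ! i)}"
    and ts': "\<And>i. i < n \<Longrightarrow> ts' ! i permutes {0..<length (fss ! i)}"
  shows "block_mors s (map (\<lambda>i. theta_ar (ts ! i) (ts' ! i) (fss ! i)) [0..<n])
    = map (\<lambda>i. theta_ob (ts' ! i)
        (map (shift (block_start s (map (sum_list \<circ> map (length \<circ> snd)) fss) i)) (block_mors (ts ! i) (fss ! i))))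
      [0..<n]"
proof -
  define As where "As = map (\<lambda>i. theta_ar (ts ! i) (ts' ! i) (fss ! i)) [0..<n]"
  have lAs: "length As = n" and nth_As: "\<And>i. i < n \<Longrightarrow> As ! i = theta_ar (ts ! i) (ts' ! i) (fss ! i)"
    by (simp_all add: As_def)
  have "map (length \<circ> snd) As = map (sum_list \<circ> map (length \<circ> snd)) fss"
    using lfss lAs by (intro nth_equalityI) (simp_all add: nth_As theta_ar_def length_theta_ob ts)
  then have "block_mors s As ! i = theta_ob (ts' ! i)
      (map (shift (block_start s (map (sum_list \<circ> map (length \<circ> snd)) fss) i)) (block_mors (ts ! i) (fss ! i)))"
    if "i < n" for i
    using that lAs ts' by (simp add: nth_As theta_ar_def shift_theta_ob)
  then show ?thesis
    using lAs by (intro nth_equalityI) (simp_all flip: As_def)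
qed

lemma (in gamma_args) theta_ar_assoc:
  assumes ts': "gamma_args s' ts' ls" and fss: "map length fss = ls"
  shows "theta_ar s s' (map (\<lambda>i. theta_ar (ts ! i) (ts' ! i) (fss ! i)) [0..<length ls])
    = theta_ar (gamma s ts ls) (gamma s' ts' ls) (concat fss)"
    (is "theta_ar s s' ?As = _")
proof -
  interpret ts': gamma_args s' ts' ls
    by (rule ts')
  define Z where "Z i = map (shift (block_start s (map (sum_list \<circ> map (length \<circ> snd)) fss) i))
    (block_mors (ts ! i) (fss ! i))" for i
  have lfss: "length fss = length ls"
    using fss by (metis length_map)
  have lfi: "length (fss ! i) = ls ! i" if "i < length ls" for i
    using fss that lfss by (metis nth_map)
  have tsi: "ts ! i permutes {0..<length (fss ! i)}" and tsi': "ts' ! i permutes {0..<length (fss ! i)}"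
    if "i < length ls" for i
    using ts[OF that] ts'.ts[OF that] lfi[OF that] by simp_all
  have Z_len: "map length (map Z [0..<length ls]) = ls"
    using lfi by (intro nth_equalityI) (simp_all add: Z_def)
  have "block_mors s ?As = map (\<lambda>i. theta_ob (ts' ! i) (Z i)) [0..<length ls]"
    using block_mors_map_theta_ar[OF lfss tsi tsi'] by (simp add: Z_def)
  also have "\<dots> = map2 theta_ob ts' (map Z [0..<length ls])"
    using ts'.length_ts by (intro nth_equalityI) simp_all
  finally have "fst (theta_ar s s' ?As) = theta_ob (gamma s' ts' ls) (concat (map Z [0..<length ls]))"
    using ts'.theta_ob_assoc[OF Z_len] by (simp add: theta_ar_def)
  also have "concat (map Z [0..<length ls]) = block_mors (gamma s ts ls) (concat fss)"
    using block_mors_gamma[OF fss] by (simp add: Z_def[abs_def])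
  finally have fst_eq: "fst (theta_ar s s' ?As) = fst (theta_ar (gamma s ts ls) (gamma s' ts' ls) (concat fss))"
    by (simp add: theta_ar_def)
  have snd_len: "map length (map (map snd) fss) = ls"
    using fss by (simp add: o_def)
  have "map snd ?As = map2 theta_ob ts (map (map snd) fss)"
    using lfss length_ts by (intro nth_equalityI) (simp_all add: theta_ar_def)
  then have "snd (theta_ar s s' ?As) = snd (theta_ar (gamma s ts ls) (gamma s' ts' ls) (concat fss))"
    using theta_ob_assoc[OF snd_len] by (simp add: theta_ar_def map_concat del: map_map)
  with fst_eq show ?thesis
    by (simp add: prod_eq_iff)
qed

lemma HM_theta_ob:
  "s permutes {0..<length Fs} \<Longrightarrow> HM bar (theta_ob s Fs) ms = theta_ob s (map (\<lambda>F. HM bar F ms) Fs)"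
  by (simp add: theta_ob_def HM_def map_concat act_map)

lemma HM_shift:
  assumes "\<forall>(x, e) \<in> set (concat F). x < length ms"
    and "\<And>x. x < length ms \<Longrightarrow> src ! (n + x) = ms ! x"
  shows "HM bar (shift n F) src = HM bar F ms"
proof -
  have "map (label_entry bar src) (shift_fib n fib) = map (label_entry bar ms) fib"
    if "\<forall>(x, e) \<in> set fib. x < length ms" for fib
    using that assms(2) by (induction fib) (auto simp: shift_fib_def add.commute)
  then show ?thesis
    using assms(1) unfolding HM_eq_label_entry shift_def by simp
qed

lemma HM_theta_ar:
  assumes s: "s permutes {0..<length fs}" and s': "s' permutes {0..<length fs}"
    and idx: "\<And>k. k < length fs \<Longrightarrow> \<forall>(x, e) \<in> set (concat (fst (fs ! k))). x < length (snd (fs ! k))"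
  shows "HM bar (fst (theta_ar s s' fs)) (snd (theta_ar s s' fs))
    = theta_ob s' (map (\<lambda>X. HM bar (fst X) (snd X)) fs)"
proof -
  define src where "src = theta_ob s (map snd fs)"
  have "map (\<lambda>F. HM bar F src) (block_mors s fs) = map (\<lambda>X. HM bar (fst X) (snd X)) fs"
  proof (rule nth_equalityI)
    fix k assume "k < length (map (\<lambda>F. HM bar F src) (block_mors s fs))"
    then have k: "k < length fs"
      by simp
    have "src ! (block_start s (map (length \<circ> snd) fs) k + x) = snd (fs ! k) ! x"
      if "x < length (snd (fs ! k))" for x
      using nth_concat_act_block_start[of s "map snd fs" k x] s k that
      by (simp add: src_def theta_ob_def o_def)
    then show "map (\<lambda>F. HM bar F src) (block_mors s fs) ! k
        = map (\<lambda>X. HM bar (fst X) (snd X)) fs ! k"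
      using k HM_shift[OF idx[OF k]] by simp
  qed simp
  then show ?thesis
    using s' by (simp add: theta_ar_def src_def HM_theta_ob)
qed

lemma dcomp_theta_ob:
  "s permutes {0..<length Gs} \<Longrightarrow> dcomp (theta_ob s Gs) F = theta_ob s (map (\<lambda>G. dcomp G F) Gs)"
  by (simp add: theta_ob_def dcomp_def map_concat act_map)

lemma orient_shift_fib: "orient e (shift_fib n xs) = shift_fib n (orient e xs)"
  by (simp add: orient_def flipfib_def shift_fib_def rev_map case_prod_beta)

lemma shift_fib_Nil [simp]: "shift_fib n [] = []"
  by (simp add: shift_fib_def)

lemma shift_fib_Cons: "shift_fib n ((j, e) # xs) = (n + j, e) # shift_fib n xs"
  by (simp add: shift_fib_def add.commute)

lemma shift_fib_append: "shift_fib n (xs @ ys) = shift_fib n xs @ shift_fib n ys"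
  by (simp add: shift_fib_def)

lemma dcomp_shift:
  assumes "\<forall>(j, e) \<in> set (concat G). F' ! (m + j) = shift_fib n (F ! j)"
  shows "dcomp (shift m G) F' = shift n (dcomp G F)"
proof -
  have "concat (map (\<lambda>(j, e). orient e (F' ! j)) (shift_fib m fib))
      = shift_fib n (concat (map (\<lambda>(j, e). orient e (F ! j)) fib))"
    if "\<forall>(j, e) \<in> set fib. F' ! (m + j) = shift_fib n (F ! j)" for fib
    using that by (induction fib) (auto simp: shift_fib_Cons shift_fib_append orient_shift_fib)
  then show ?thesis
    using assms unfolding dcomp_eq_orient shift_def by simp
qed

lemma nth_theta_ob_block_mors:
  assumes s': "s' permutes {0..<length fs}" and k: "k < length fs" and j: "j < length (fst (fs ! k))"
  shows "theta_ob s' (block_mors s fs) ! (block_start s' (map (length \<circ> fst) fs) k + j)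
    = shift_fib (block_start s (map (length \<circ> snd) fs) k) (fst (fs ! k) ! j)"
proof -
  have "map length (block_mors s fs) = map (length \<circ> fst) fs"
    by (rule nth_equalityI) (simp_all add: shift_def)
  then show ?thesis
    using nth_concat_act_block_start[of s' "block_mors s fs" k j] s' k j
    by (simp add: theta_ob_def shift_def)
qed

lemma theta_ar_comp:
  assumes s: "s permutes {0..<length fs}" and s1: "s1 permutes {0..<length fs}"
    and s2: "s2 permutes {0..<length fs}" and lgs: "length gs = length fs"
    and len: "\<And>k. k < length fs \<Longrightarrow> length (snd (gs ! k)) = length (fst (fs ! k))"
    and idx: "\<And>k. k < length fs \<Longrightarrow> \<forall>(x, e) \<in> set (concat (fst (gs ! k))). x < length (snd (gs ! k))"
  shows "(dcomp (fst (theta_ar s1 s2 gs)) (fst (theta_ar s s1 fs)), snd (theta_ar s s1 fs))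
    = theta_ar s s2 (map2 (\<lambda>X Y. (dcomp (fst X) (fst Y), snd Y)) gs fs)"
proof -
  define FF where "FF = theta_ob s1 (block_mors s fs)"
  have lens: "map (length \<circ> snd) gs = map (length \<circ> fst) fs"
    using lgs len by (intro nth_equalityI) simp_all
  have "map (\<lambda>G. dcomp G FF) (block_mors s1 gs)
      = block_mors s (map2 (\<lambda>X Y. (dcomp (fst X) (fst Y), snd Y)) gs fs)"
  proof (rule nth_equalityI)
    fix k assume "k < length (map (\<lambda>G. dcomp G FF) (block_mors s1 gs))"
    then have k: "k < length fs"
      using lgs by simp
    have "FF ! (block_start s1 (map (length \<circ> snd) gs) k + j)
        = shift_fib (block_start s (map (length \<circ> snd) fs) k) (fst (fs ! k) ! j)"
      if "j < length (snd (gs ! k))" for j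
      using nth_theta_ob_block_mors[OF s1 k] that len[OF k] lens by (simp add: FF_def)
    then have "dcomp (shift (block_start s1 (map (length \<circ> snd) gs) k) (fst (gs ! k))) FF
        = shift (block_start s (map (length \<circ> snd) fs) k) (dcomp (fst (gs ! k)) (fst (fs ! k)))"
      using idx[OF k] by (intro dcomp_shift) fast
    moreover have "map (length \<circ> snd) (map2 (\<lambda>X Y. (dcomp (fst X) (fst Y), snd Y)) gs fs)
        = map (length \<circ> snd) fs"
      using lgs by (intro nth_equalityI) simp_all
    ultimately show "map (\<lambda>G. dcomp G FF) (block_mors s1 gs) ! k
        = block_mors s (map2 (\<lambda>X Y. (dcomp (fst X) (fst Y), snd Y)) gs fs) ! k"
      using k lgs by simp
  qed (simp add: lgs)
  moreover have "map snd (map2 (\<lambda>X Y. (dcomp (fst X) (fst Y), snd Y)) gs fs) = map snd fs"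
    using lgs by (intro nth_equalityI) simp_all
  ultimately show ?thesis
    using s2 lgs by (simp add: theta_ar_def dcomp_theta_ob FF_def)
qed

lemma Ar_tuple_cat_nth_index_less:
  "set fs \<subseteq> Ar (tuple_cat bar) \<Longrightarrow> k < length fs
    \<Longrightarrow> \<forall>(x, e) \<in> set (concat (fst (fs ! k))). x < length (snd (fs ! k))"
  using Ar_tuple_cat_index_less[of "fs ! k"] nth_mem[of k fs] by blast

lemma theta_ar_in_Ar:
  assumes "s permutes {0..<length fs}" and "s' permutes {0..<length fs}" and "set fs \<subseteq> Ar (tuple_cat bar)"
  shows "theta_ar s s' fs \<in> Ar (tuple_cat bar)"
  using assms theta_ar_dhom[of s fs s'] by (simp add: Ar_tuple_cat subset_iff)

lemma Dom_theta_ar: "Dom (tuple_cat bar) (theta_ar s s' fs) = theta_ob s (map (Dom (tuple_cat bar)) fs)"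
  by (simp add: Dom_tuple_cat theta_ar_def)

lemma Cod_theta_ar:
  assumes "s permutes {0..<length fs}" and "s' permutes {0..<length fs}" and "set fs \<subseteq> Ar (tuple_cat bar)"
  shows "Cod (tuple_cat bar) (theta_ar s s' fs) = theta_ob s' (map (Cod (tuple_cat bar)) fs)"
  using HM_theta_ar[of s fs s' bar] Ar_tuple_cat_nth_index_less[OF assms(3)] assms(1,2)
  by (simp add: Cod_tuple_cat)

lemma Id_theta_ar:
  "s permutes {0..<length xs} \<Longrightarrow>
    theta_ar s s (map (Id (tuple_cat bar)) xs) = Id (tuple_cat bar) (theta_ob s xs)"
  by (simp add: Id_tuple_cat theta_ar_id)

lemma Comp_theta_ar:
  assumes s: "s permutes {0..<length fs}" and s': "s' permutes {0..<length fs}"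
    and s'': "s'' permutes {0..<length fs}" and lgs: "length gs = length fs"
    and gs: "set gs \<subseteq> Ar (tuple_cat bar)"
    and dom_cod: "map (Dom (tuple_cat bar)) gs = map (Cod (tuple_cat bar)) fs"
  shows "Comp (tuple_cat bar) (theta_ar s' s'' gs) (theta_ar s s' fs)
    = theta_ar s s'' (map2 (Comp (tuple_cat bar)) gs fs)"
proof -
  have "length (snd (gs ! k)) = length (fst (fs ! k))" if "k < length fs" for k
    using arg_cong[OF dom_cod, of "\<lambda>l. l ! k"] that lgs by (simp add: Dom_tuple_cat Cod_tuple_cat HM_def)
  then show ?thesis
    using theta_ar_comp[OF s s' s'' lgs] Ar_tuple_cat_nth_index_less[OF gs] lgs by (simp add: Comp_tuple_cat)
qed

lemma gamma_argsI:
  assumes "s permutes {0..<length xss}" and "length ts = length xss"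
    and "\<forall>i < length xss. ts ! i permutes {0..<length (xss ! i)}"
  shows "gamma_args s ts (map length xss)"
  using assms by unfold_locales auto

lemma theta_ob_gamma:
  assumes "s permutes {0..<length xss}" and "length ts = length xss"
    and "\<forall>i < length xss. ts ! i permutes {0..<length (xss ! i)}"
  shows "theta_ob s (map2 theta_ob ts xss) = theta_ob (gamma s ts (map length xss)) (concat xss)"
  using gamma_args.theta_ob_assoc[OF gamma_argsI[OF assms] refl] .

lemma theta_ar_gamma:
  assumes "s permutes {0..<length fss}" and "length ts = length fss"
    and "\<forall>i < length fss. ts ! i permutes {0..<length (fss ! i)}"
    and "s' permutes {0..<length fss}" and "length ts' = length fss"
    and "\<forall>i < length fss. ts' ! i permutes {0..<length (fss ! i)}"
  shows "theta_ar s s' (map (\<lambda>i. theta_ar (ts ! i) (ts' ! i) (fss ! i)) [0..<length fss])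
    = theta_ar (gamma s ts (map length fss)) (gamma s' ts' (map length fss)) (concat fss)"
  using gamma_args.theta_ar_assoc[OF gamma_argsI[OF assms(1-3)] gamma_argsI[OF assms(4-6)] refl] by simp

theorem Dcat_algebra_tuple_cat:
  fixes bar :: "'m::monoid_mult \<Rightarrow> 'm"
  assumes "involution bar"
  shows "Dcat_algebra (tuple_cat bar) theta_ob theta_ar"
  unfolding Dcat_algebra_def perms_def mem_Collect_eq
  using category_tuple_cat[OF assms]
  by (intro conjI allI impI ballI; (elim conjE)?)
    (auto simp: theta_ob_unit theta_ar_unit theta_ob_equivariant theta_ar_equivariant theta_ar_in_Ar
      Dom_theta_ar Cod_theta_ar Id_theta_ar Comp_theta_ar intro!: theta_ob_gamma theta_ar_gamma)

theorem lemma2p3: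
  fixes bar :: "'m::monoid_mult \<Rightarrow> 'm"
  assumes "involution bar"
  shows "\<exists>thO thA. Dcat_algebra (tuple_cat bar) thO thA"
  using Dcat_algebra_tuple_cat[OF assms] by blast

end
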